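(* Let $N\in\mathbb{N}$ and let $f(x)=\sum_{n=1}^N\alpha_nx^n\mathbbm{1}_{\{x<0\}}+\sum_{n=1}^N\beta_nx^n\mathbbm{1}_{\{x\ge0\}}$ for $x\in\mathbb{R}$, where the coefficients $\alpha_1,\dots,\alpha_N,\beta_1,\dots,\beta_N$ are drawn independently from a distribution absolutely continuous with respect to Lebesgue measure. Let $\eta>0$ and consider gradient descent $x_{t+1}=x_t-\eta f'_+(x_t)$. Suppose $f'_+(0)<0$ or $f'_-(0)<0$. Then, with probability $1$, there exist $a=a(\boldsymbol\alpha,\boldsymbol\beta)<0<b=b(\boldsymbol\alpha,\boldsymbol\beta)$ and a finite $\tilde t=\tilde t(\eta,\boldsymbol\alpha,\boldsymbol\beta)>0$ such that, with $\chi=[a,b]$: whenever $x_t\in\chi$, there exists $0<t'\le\tilde t$ with $x_{t+t'}\notin\chi$.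
   Context: Here $f'_+(x)=\lim_{h\to0^+}\frac{f(x+h)-f(x)}{h}$ and $f'_-(x)=\lim_{h\to0^+}\frac{f(x-h)-f(x)}{h}$ denote the one-sided directional derivatives of $f$ at $x$ in the directions $+1$ and $-1$, respectively. *)

theory Defs
  imports "HOL-Probability.Probability"
begin

definition dir_deriv_plus :: "(real \<Rightarrow> real) \<Rightarrow> real \<Rightarrow> real" where
  "dir_deriv_plus f x = Lim (at_right 0) (\<lambda>h. (f (x + h) - f x) / h)"

definition dir_deriv_minus :: "(real \<Rightarrow> real) \<Rightarrow> real \<Rightarrow> real" where
  "dir_deriv_minus f x = Lim (at_right 0) (\<lambda>h. (f (x - h) - f x) / h)"

definition pw_poly :: "nat \<Rightarrow> (nat \<Rightarrow> real) \<Rightarrow> (nat \<Rightarrow> real) \<Rightarrow> real \<Rightarrow> real" where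
  "pw_poly N \<alpha> \<beta> x =
     (if x < 0 then (\<Sum>n=1..N. \<alpha> n * x ^ n) else (\<Sum>n=1..N. \<beta> n * x ^ n))"

definition gd_step :: "real \<Rightarrow> (real \<Rightarrow> real) \<Rightarrow> real \<Rightarrow> real" where
  "gd_step \<eta> f x = x - \<eta> * dir_deriv_plus f x"

end

theory Submission
  imports Defs
begin

text \<open>
  Almost surely \<open>\<alpha>\<^sub>1 \<noteq> 0\<close> and \<open>\<beta>\<^sub>1 \<noteq> 0\<close>, since a point is a Lebesgue null set.
  These are the one-sided slopes of \<open>f\<close> at 0, so by continuity of the polynomial derivatives
  every gradient step near 0 moves the iterate by at least \<open>c = \<eta> min |\<alpha>\<^sub>1| |\<beta>\<^sub>1| / 2\<close>,
  in a direction fixed on each side of 0. The hypothesis rules out exactly the sink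
  \<open>\<alpha>\<^sub>1 < 0 < \<beta>\<^sub>1\<close> where both sides push towards 0; otherwise the iterate moves
  monotonically while it stays in \<open>[a, b]\<close>, so it leaves after at most \<open>(b - a) / c + 1\<close> steps.
\<close>

lemma AE_neq_of_absolutely_continuous:
  fixes c :: real
  assumes "absolutely_continuous lborel D"
  shows "AE x in D. x \<noteq> c"
proof -
  have "{c} \<in> null_sets D"
    using assms countable_imp_null_set_lborel[of "{c}"] unfolding absolutely_continuous_def by auto
  then show ?thesis
    using AE_not_in by fastforce
qed

lemma AE_pair_measure_components_nonzero:
  fixes D :: "real measure"
  assumes "prob_space D" "sets D = sets borel" "absolutely_continuous lborel D" "i \<in> I"
  shows "AE \<omega> in (\<Pi>\<^sub>M n\<in>I. D) \<Otimes>\<^sub>M (\<Pi>\<^sub>M n\<in>I. D). fst \<omega> i \<noteq> 0 \<and> snd \<omega> i \<noteq> 0"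
proof -
  let ?P = "\<Pi>\<^sub>M n\<in>I. D"
  interpret pair_prob_space ?P ?P
    using assms(1) by (simp add: pair_prob_space_def pair_sigma_finite_def
        prob_space_imp_sigma_finite prob_space_PiM)
  have component: "AE \<omega> in ?P. \<omega> i \<noteq> 0"
    using AE_PiM_component[of I "\<lambda>_. D" i] AE_neq_of_absolutely_continuous assms by blast
  show ?thesis
  proof (rule AE_pair_measure)
    show "{\<omega> \<in> space (?P \<Otimes>\<^sub>M ?P). fst \<omega> i \<noteq> 0 \<and> snd \<omega> i \<noteq> 0} \<in> sets (?P \<Otimes>\<^sub>M ?P)"
      using assms(2,4) by measurable
    show "AE x in ?P. AE y in ?P. fst (x, y) i \<noteq> 0 \<and> snd (x, y) i \<noteq> 0"
      using component by eventually_elim (use component in auto)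
  qed
qed

definition poly_sum :: "nat \<Rightarrow> (nat \<Rightarrow> real) \<Rightarrow> real \<Rightarrow> real" where
  "poly_sum N c x = (\<Sum>n=1..N. c n * x ^ n)"

definition poly_sum_deriv :: "nat \<Rightarrow> (nat \<Rightarrow> real) \<Rightarrow> real \<Rightarrow> real" where
  "poly_sum_deriv N c x = (\<Sum>n=1..N. c n * (real n * x ^ (n - 1)))"

lemma has_real_derivative_poly_sum:
  "(poly_sum N c has_real_derivative poly_sum_deriv N c x) (at x)"
  unfolding poly_sum_def poly_sum_deriv_def
  by (auto intro!: derivative_eq_intros sum.cong simp: ac_simps)

lemma isCont_poly_sum_deriv: "isCont (poly_sum_deriv N c) x"
  unfolding poly_sum_deriv_def by (auto intro!: continuous_intros)

lemma poly_sum_deriv_0: "poly_sum_deriv N c 0 = (if N = 0 then 0 else c 1)"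
proof -
  have "poly_sum_deriv N c 0 = (\<Sum>n\<in>{1..N}. if n = 1 then c 1 else 0)"
    unfolding poly_sum_deriv_def by (intro sum.cong) auto
  then show ?thesis by simp
qed

lemma pw_poly_eq_poly_sum:
  "pw_poly N \<alpha> \<beta> x = (if x < 0 then poly_sum N \<alpha> x else poly_sum N \<beta> x)"
  unfolding pw_poly_def poly_sum_def by simp

lemma dir_deriv_plus_eqI:
  assumes "(g has_real_derivative D) (at x)"
    and "\<forall>\<^sub>F h in at_right 0. f (x + h) - f x = g (x + h) - g x"
  shows "dir_deriv_plus f x = D"
proof -
  have "((\<lambda>h. (g (x + h) - g x) / h) \<longlongrightarrow> D) (at_right 0)"
    using assms(1) unfolding DERIV_def by (rule filterlim_mono) (simp_all add: at_le)
  then have "((\<lambda>h. (f (x + h) - f x) / h) \<longlongrightarrow> D) (at_right 0)"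
    by (rule tendsto_cong[THEN iffD1, rotated]) (use assms(2) in \<open>auto elim: eventually_mono\<close>)
  then show ?thesis
    unfolding dir_deriv_plus_def by (rule tendsto_Lim[rotated]) simp
qed

lemma dir_deriv_minus_eqI:
  assumes "(g has_real_derivative D) (at x)"
    and "\<forall>\<^sub>F h in at_right 0. f (x - h) - f x = g (x - h) - g x"
  shows "dir_deriv_minus f x = - D"
proof -
  have "((\<lambda>y. g (- y)) has_real_derivative - D) (at (- x))"
    using assms(1) DERIV_mirror[of g D "- x"] by simp
  moreover have "\<forall>\<^sub>F h in at_right 0. f (- (- x + h)) - f (- (- x)) = g (- (- x + h)) - g (- (- x))"
    using assms(2) by simp
  ultimately have "dir_deriv_plus (\<lambda>y. f (- y)) (- x) = - D"
    by (rule dir_deriv_plus_eqI)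
  then show ?thesis
    unfolding dir_deriv_plus_def dir_deriv_minus_def by simp
qed

lemma dir_deriv_plus_pw_poly:
  "dir_deriv_plus (pw_poly N \<alpha> \<beta>) x = (if x < 0 then poly_sum_deriv N \<alpha> x else poly_sum_deriv N \<beta> x)"
proof (cases "x < 0")
  case True
  have "\<forall>\<^sub>F h in at_right 0. h \<in> {0<..<- x}"
    using True by (intro eventually_at_right_real) simp
  then have "\<forall>\<^sub>F h in at_right 0.
      pw_poly N \<alpha> \<beta> (x + h) - pw_poly N \<alpha> \<beta> x = poly_sum N \<alpha> (x + h) - poly_sum N \<alpha> x"
    by eventually_elim (use True in \<open>auto simp: pw_poly_eq_poly_sum\<close>)
  with True show ?thesis
    using dir_deriv_plus_eqI[OF has_real_derivative_poly_sum] by simp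
next
  case False
  have "\<forall>\<^sub>F h in at_right 0. 0 < (h::real)"
    by (simp add: eventually_at_right_less)
  then have "\<forall>\<^sub>F h in at_right 0.
      pw_poly N \<alpha> \<beta> (x + h) - pw_poly N \<alpha> \<beta> x = poly_sum N \<beta> (x + h) - poly_sum N \<beta> x"
    by eventually_elim (use False in \<open>auto simp: pw_poly_eq_poly_sum\<close>)
  with False show ?thesis
    using dir_deriv_plus_eqI[OF has_real_derivative_poly_sum] by simp
qed

lemma dir_deriv_minus_pw_poly_0:
  "dir_deriv_minus (pw_poly N \<alpha> \<beta>) 0 = - poly_sum_deriv N \<alpha> 0"
proof (rule dir_deriv_minus_eqI[OF has_real_derivative_poly_sum])
  have "\<forall>\<^sub>F h in at_right 0. 0 < (h::real)"
    by (simp add: eventually_at_right_less)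
  then show "\<forall>\<^sub>F h in at_right 0.
      pw_poly N \<alpha> \<beta> (0 - h) - pw_poly N \<alpha> \<beta> 0 = poly_sum N \<alpha> (0 - h) - poly_sum N \<alpha> 0"
    by eventually_elim (auto simp: pw_poly_eq_poly_sum poly_sum_def)
qed

lemma funpow_escape_by_potential:
  fixes T :: "'a \<Rightarrow> 'a" and V :: "'a \<Rightarrow> real"
  assumes "0 < c" and "S \<subseteq> X" and "x \<in> S"
    and increase: "\<And>y. y \<in> S \<Longrightarrow> V y + c \<le> V (T y)"
    and stay: "\<And>y. y \<in> S \<Longrightarrow> T y \<in> X \<Longrightarrow> T y \<in> S"
    and spread: "\<And>y z. y \<in> S \<Longrightarrow> z \<in> S \<Longrightarrow> V z - V y \<le> L"
  shows "\<exists>k. 0 < k \<and> k \<le> nat \<lceil>L / c\<rceil> + 1 \<and> (T ^^ k) x \<notin> X"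
proof (rule ccontr)
  assume trapped: "\<not> ?thesis"
  define n where "n = nat \<lceil>L / c\<rceil> + 1"
  have "(T ^^ k) x \<in> S \<and> V x + real k * c \<le> V ((T ^^ k) x)" if "k \<le> n" for k
    using that
  proof (induction k)
    case 0
    then show ?case using \<open>x \<in> S\<close> by simp
  next
    case (Suc k)
    then have "(T ^^ k) x \<in> S" "V x + real k * c \<le> V ((T ^^ k) x)" by auto
    moreover have "(T ^^ Suc k) x \<in> X"
      using trapped Suc.prems unfolding n_def by auto
    ultimately show ?case
      using increase[of "(T ^^ k) x"] stay[of "(T ^^ k) x"] by (auto simp: algebra_simps)
  qed
  then have "V x + real n * c \<le> V ((T ^^ n) x)" "(T ^^ n) x \<in> S" by auto
  then have "real n * c \<le> L"
    using spread[of x "(T ^^ n) x"] \<open>x \<in> S\<close> by linarith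
  moreover have "L / c < real n"
    unfolding n_def by linarith
  then have "L < real n * c"
    using \<open>0 < c\<close> by (simp add: field_simps)
  ultimately show False by linarith
qed

text \<open>\<open>sA \<le> sB\<close> excludes the one sign pattern in which both sides drift towards 0.\<close>

lemma funpow_escape_interval_by_drift:
  fixes T :: "real \<Rightarrow> real"
  assumes "0 < c" and "y \<in> {a..b}"
    and signs: "sA \<in> {-1, 1}" "sB \<in> {-1, 1}" "sA \<le> sB"
    and left: "\<And>x. x \<in> {a..<0} \<Longrightarrow> c \<le> sA * (T x - x)"
    and right: "\<And>x. x \<in> {0..b} \<Longrightarrow> c \<le> sB * (T x - x)"
  shows "\<exists>k. 0 < k \<and> k \<le> nat \<lceil>(b - a) / c\<rceil> + 1 \<and> (T ^^ k) y \<notin> {a..b}"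
proof -
  consider "sA = sB" | "sA = -1" "sB = 1"
    using signs by force
  then show ?thesis
  proof cases
    case 1
    have "c \<le> sA * (T x - x)" if "x \<in> {a..b}" for x
      using left[of x] right[of x] that 1 by (cases "x < 0") auto
    then show ?thesis
      using \<open>y \<in> {a..b}\<close> signs(1)
      by (intro funpow_escape_by_potential[where S = "{a..b}" and V = "\<lambda>x. sA * x", OF \<open>0 < c\<close>])
        (auto simp: algebra_simps)
  next
    case 2
    show ?thesis
    proof (cases "y < 0")
      case True
      show ?thesis
      proof (rule funpow_escape_by_potential[where S = "{x \<in> {a..b}. x < 0}" and V = uminus])
        fix x assume "x \<in> {x \<in> {a..b}. x < 0}"
        then show "- x + c \<le> - T x" and "T x \<in> {a..b} \<Longrightarrow> T x \<in> {x \<in> {a..b}. x < 0}"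
          using left[of x] 2 \<open>0 < c\<close> by auto
      qed (use \<open>0 < c\<close> \<open>y \<in> {a..b}\<close> True in auto)
    next
      case False
      show ?thesis
      proof (rule funpow_escape_by_potential[where S = "{x \<in> {a..b}. 0 \<le> x}" and V = id])
        fix x assume "x \<in> {x \<in> {a..b}. 0 \<le> x}"
        then show "id x + c \<le> id (T x)" and "T x \<in> {a..b} \<Longrightarrow> T x \<in> {x \<in> {a..b}. 0 \<le> x}"
          using right[of x] 2 \<open>0 < c\<close> by auto
      qed (use \<open>0 < c\<close> \<open>y \<in> {a..b}\<close> False in auto)
    qed
  qed
qed

lemma isCont_sgn_bounded_below:
  fixes g :: "real \<Rightarrow> real"
  assumes "isCont g x0" and "g x0 \<noteq> 0"
  shows "\<exists>\<delta>>0. \<forall>x. \<bar>x - x0\<bar> < \<delta> \<longrightarrow> \<bar>g x0\<bar> / 2 \<le> sgn (g x0) * g x"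
proof -
  have "0 < \<bar>g x0\<bar> / 2"
    using assms(2) by simp
  then obtain \<delta> where "\<delta> > 0" and \<delta>: "\<And>x. \<bar>x - x0\<bar> < \<delta> \<Longrightarrow> \<bar>g x - g x0\<bar> < \<bar>g x0\<bar> / 2"
    using assms(1) unfolding continuous_at_eps_delta dist_real_def by blast
  have "\<bar>g x0\<bar> / 2 \<le> sgn (g x0) * g x" if "\<bar>x - x0\<bar> < \<delta>" for x
    using \<delta>[OF that] by (cases "g x0 > 0") (auto simp: abs_if split: if_splits)
  with \<open>\<delta> > 0\<close> show ?thesis by blast
qed

lemma gd_step_leaves_interval:
  fixes f :: "real \<Rightarrow> real"
  assumes "0 < \<eta>" and "A \<noteq> 0" and "B \<noteq> 0" and "sgn B \<le> sgn A"
    and left: "\<And>x. x \<in> {a..<0} \<Longrightarrow> \<bar>A\<bar> / 2 \<le> sgn A * dir_deriv_plus f x"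
    and right: "\<And>x. x \<in> {0..b} \<Longrightarrow> \<bar>B\<bar> / 2 \<le> sgn B * dir_deriv_plus f x"
  shows "\<exists>tt::nat. 0 < tt \<and>
           (\<forall>x0 t. ((gd_step \<eta> f) ^^ t) x0 \<in> {a..b} \<longrightarrow>
              (\<exists>t'. 0 < t' \<and> t' \<le> tt \<and> ((gd_step \<eta> f) ^^ (t + t')) x0 \<notin> {a..b}))"
proof -
  define T where "T = gd_step \<eta> f"
  define c where "c = \<eta> * min \<bar>A\<bar> \<bar>B\<bar> / 2"
  have "0 < c"
    using \<open>0 < \<eta>\<close> \<open>A \<noteq> 0\<close> \<open>B \<noteq> 0\<close> unfolding c_def by simp
  have drift: "c \<le> - sgn S * (T x - x)" if "\<bar>S\<bar> / 2 \<le> sgn S * dir_deriv_plus f x"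
    and "S = A \<or> S = B" for S x
  proof -
    have "min \<bar>A\<bar> \<bar>B\<bar> \<le> \<bar>S\<bar>"
      using that(2) by auto
    then have "c \<le> \<eta> * (\<bar>S\<bar> / 2)"
      using mult_left_mono[of "min \<bar>A\<bar> \<bar>B\<bar>" "\<bar>S\<bar>" \<eta>] \<open>0 < \<eta>\<close> unfolding c_def by simp
    also have "\<dots> \<le> \<eta> * (sgn S * dir_deriv_plus f x)"
      using mult_left_mono[OF that(1)] \<open>0 < \<eta>\<close> by simp
    also have "\<dots> = - sgn S * (T x - x)"
      unfolding T_def gd_step_def by (simp add: algebra_simps)
    finally show ?thesis .
  qed
  have signs: "- sgn A \<in> {-1, 1}" "- sgn B \<in> {-1, 1}" "- sgn A \<le> - sgn B"
    using \<open>A \<noteq> 0\<close> \<open>B \<noteq> 0\<close> \<open>sgn B \<le> sgn A\<close> by (auto simp: sgn_if)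
  show ?thesis
    unfolding T_def[symmetric]
  proof (rule exI[of _ "nat \<lceil>(b - a) / c\<rceil> + 1"], intro conjI allI impI)
    fix x0 t
    assume "(T ^^ t) x0 \<in> {a..b}"
    from funpow_escape_interval_by_drift[OF \<open>0 < c\<close> this signs drift drift] left right
    obtain k where "0 < k" "k \<le> nat \<lceil>(b - a) / c\<rceil> + 1" "(T ^^ k) ((T ^^ t) x0) \<notin> {a..b}"
      by blast
    then show "\<exists>t'. 0 < t' \<and> t' \<le> nat \<lceil>(b - a) / c\<rceil> + 1 \<and> (T ^^ (t + t')) x0 \<notin> {a..b}"
      by (metis add.commute funpow_add o_apply)
  qed simp
qed

lemma pw_poly_gd_leaves_neighbourhood:
  fixes N :: nat and \<alpha> \<beta> :: "nat \<Rightarrow> real"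
  defines "f \<equiv> pw_poly N \<alpha> \<beta>"
  assumes nondegenerate: "dir_deriv_plus f 0 \<noteq> 0" "dir_deriv_minus f 0 \<noteq> 0"
    and not_minimum: "dir_deriv_plus f 0 < 0 \<or> dir_deriv_minus f 0 < 0"
  shows "\<exists>a b. a < 0 \<and> 0 < b \<and>
           (\<forall>\<eta>>0. \<exists>tt::nat. 0 < tt \<and>
              (\<forall>x0 t. ((gd_step \<eta> f) ^^ t) x0 \<in> {a..b} \<longrightarrow>
                 (\<exists>t'. 0 < t' \<and> t' \<le> tt \<and> ((gd_step \<eta> f) ^^ (t + t')) x0 \<notin> {a..b})))"
proof -
  define A where "A = poly_sum_deriv N \<alpha> 0"
  define B where "B = poly_sum_deriv N \<beta> 0"
  have "dir_deriv_plus f 0 = B" "dir_deriv_minus f 0 = - A"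
    unfolding f_def A_def B_def by (simp_all add: dir_deriv_plus_pw_poly dir_deriv_minus_pw_poly_0)
  with nondegenerate not_minimum have "A \<noteq> 0" "B \<noteq> 0" "sgn B \<le> sgn A"
    by (auto simp: sgn_if)
  obtain \<delta>A where "\<delta>A > 0"
    and \<delta>A: "\<And>x. \<bar>x\<bar> < \<delta>A \<Longrightarrow> \<bar>A\<bar> / 2 \<le> sgn A * poly_sum_deriv N \<alpha> x"
    using isCont_sgn_bounded_below[OF isCont_poly_sum_deriv[where N = N and c = \<alpha> and x = 0]] \<open>A \<noteq> 0\<close>
    unfolding A_def by auto
  obtain \<delta>B where "\<delta>B > 0"
    and \<delta>B: "\<And>x. \<bar>x\<bar> < \<delta>B \<Longrightarrow> \<bar>B\<bar> / 2 \<le> sgn B * poly_sum_deriv N \<beta> x"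
    using isCont_sgn_bounded_below[OF isCont_poly_sum_deriv[where N = N and c = \<beta> and x = 0]] \<open>B \<noteq> 0\<close>
    unfolding B_def by auto
  define b where "b = min \<delta>A \<delta>B / 2"
  define a where "a = - b"
  have "a < 0" "0 < b"
    using \<open>\<delta>A > 0\<close> \<open>\<delta>B > 0\<close> unfolding a_def b_def by simp_all
  moreover have "\<bar>A\<bar> / 2 \<le> sgn A * dir_deriv_plus f x" if "x \<in> {a..<0}" for x
    using \<delta>A[of x] that unfolding f_def a_def b_def dir_deriv_plus_pw_poly by auto
  moreover have "\<bar>B\<bar> / 2 \<le> sgn B * dir_deriv_plus f x" if "x \<in> {0..b}" for x
    using \<delta>B[of x] that \<open>\<delta>B > 0\<close> unfolding f_def b_def dir_deriv_plus_pw_poly by auto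
  ultimately show ?thesis
    using gd_step_leaves_interval[OF _ \<open>A \<noteq> 0\<close> \<open>B \<noteq> 0\<close> \<open>sgn B \<le> sgn A\<close>] by blast
qed

theorem proposition2:
  fixes N :: nat and D :: "real measure"
  assumes "prob_space D"
    and "sets D = sets borel"
    and "absolutely_continuous lborel D"
  shows "AE ab in ((\<Pi>\<^sub>M n\<in>{1..N}. D) \<Otimes>\<^sub>M (\<Pi>\<^sub>M n\<in>{1..N}. D)).
           (dir_deriv_plus (pw_poly N (fst ab) (snd ab)) 0 < 0
              \<or> dir_deriv_minus (pw_poly N (fst ab) (snd ab)) 0 < 0) \<longrightarrow>
           (\<exists>a b. a < 0 \<and> 0 < b \<and>
              (\<forall>\<eta>>0. \<exists>tt::nat. 0 < tt \<and>
                 (\<forall>x0 t. ((gd_step \<eta> (pw_poly N (fst ab) (snd ab))) ^^ t) x0 \<in> {a..b} \<longrightarrow>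
                    (\<exists>t'. 0 < t' \<and> t' \<le> tt \<and>
                       ((gd_step \<eta> (pw_poly N (fst ab) (snd ab))) ^^ (t + t')) x0 \<notin> {a..b}))))"
proof (cases "N = 0")
  case True
  then show ?thesis
    by (simp add: dir_deriv_plus_pw_poly dir_deriv_minus_pw_poly_0 poly_sum_deriv_0)
next
  case False
  then have nonzero: "AE ab in ((\<Pi>\<^sub>M n\<in>{1..N}. D) \<Otimes>\<^sub>M (\<Pi>\<^sub>M n\<in>{1..N}. D)).
      fst ab 1 \<noteq> 0 \<and> snd ab 1 \<noteq> 0"
    using assms by (intro AE_pair_measure_components_nonzero) auto
  have slopes: "dir_deriv_plus (pw_poly N \<alpha> \<beta>) 0 \<noteq> 0" "dir_deriv_minus (pw_poly N \<alpha> \<beta>) 0 \<noteq> 0"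
    if "\<alpha> 1 \<noteq> 0 \<and> \<beta> 1 \<noteq> 0" for \<alpha> \<beta> :: "nat \<Rightarrow> real"
    using that False
    by (simp_all add: dir_deriv_plus_pw_poly dir_deriv_minus_pw_poly_0 poly_sum_deriv_0)
  show ?thesis
    using nonzero
    by (rule AE_mp) (intro AE_I2 impI pw_poly_gd_leaves_neighbourhood slopes; assumption)
qed

end
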